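(* Let $\mu\ge0$ be an integer and let $\gamma\ge0$, $m\ge\gamma$ and $0\le\lambda\le\gamma$ be integers. Then the function $$\mathsf{M}^{(\mu)}_m(\lambda)=\frac{1}{2\pi^{3/2}}\frac{(4\lambda+4\mu+1)\Gamma(\lambda+\frac12)\Gamma(2\mu+\frac12)\Gamma(\lambda+\mu+\frac12)}{\Gamma(\lambda+\mu+1)\Gamma(\lambda+2\mu+1)}\cdot\frac{(2\mu+2m+1)\Gamma(m-\lambda+\frac12)\Gamma(m+\lambda+2\mu+1)}{\Gamma(m-\lambda+1)\Gamma(m+\lambda+2\mu+\frac32)}$$ is decreasing with respect to $m$. *)

theory Defs
  imports "HOL-Analysis.Analysis"
begin

definition Mfun :: "nat \<Rightarrow> nat \<Rightarrow> nat \<Rightarrow> real" where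
  "Mfun mu m l =
     1 / (2 * pi powr (3/2)) *
     ((4 * real l + 4 * real mu + 1) * Gamma (real l + 1/2) * Gamma (2 * real mu + 1/2)
        * Gamma (real l + real mu + 1/2))
     / (Gamma (real l + real mu + 1) * Gamma (real l + 2 * real mu + 1)) *
     ((2 * real mu + 2 * real m + 1) * Gamma (real m - real l + 1/2)
        * Gamma (real m + real l + 2 * real mu + 1))
     / (Gamma (real m - real l + 1) * Gamma (real m + real l + 2 * real mu + 3/2))"

end

theory Submission
  imports Defs
begin

text \<open>Writing \<open>x = m - \<lambda> + 1/2\<close> and \<open>y = m + \<lambda> + 2\<mu> + 1\<close>, the \<open>m\<close>-dependent factor of
  \<open>Mfun \<mu> m \<lambda>\<close> is \<open>q x y = (x + y - 1/2) \<Gamma>(x) \<Gamma>(y) / (\<Gamma>(x + 1/2) \<Gamma>(y + 1/2))\<close>, and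
  increasing \<open>m\<close> by one shifts both \<open>x\<close> and \<open>y\<close> by one. By the functional equation of \<open>\<Gamma>\<close>,
  \<open>q (x + 1) (y + 1) \<le> q x y\<close> reduces to a polynomial inequality whose defect is
  \<open>((x - y)\<^sup>2 - 1/4) / 2\<close>; it holds because \<open>y - x = 2\<lambda> + 2\<mu> + 1/2 \<ge> 1/2\<close>.\<close>

definition gamma_half_quotient :: "real \<Rightarrow> real \<Rightarrow> real" where
  "gamma_half_quotient x y =
     (x + y - 1/2) * Gamma x * Gamma y / (Gamma (x + 1/2) * Gamma (y + 1/2))"

lemma Gamma_plus1_pos:
  fixes x :: real
  assumes "x > 0"
  shows "Gamma (x + 1) = x * Gamma x"
  using assms by (intro Gamma_plus1) (auto elim!: nonpos_Ints_cases)

lemma half_separated_product_le: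
  fixes x y :: real
  assumes "1/2 \<le> \<bar>x - y\<bar>"
  shows "(x + y + 3/2) * x * y \<le> (x + y - 1/2) * (x + 1/2) * (y + 1/2)"
proof -
  have "(1/2)\<^sup>2 \<le> \<bar>x - y\<bar>\<^sup>2"
    using assms by (intro power_mono) simp_all
  then have "1/4 \<le> (x - y)\<^sup>2"
    by (simp add: power2_eq_square)
  moreover have "(x + y - 1/2) * (x + 1/2) * (y + 1/2) - (x + y + 3/2) * x * y
      = ((x - y)\<^sup>2 - 1/4) / 2"
    by (simp add: field_simps power2_eq_square)
  ultimately show ?thesis by simp
qed

lemma gamma_half_quotient_shift1_le:
  fixes x y :: real
  assumes "x > 0" "y > 0" "1/2 \<le> \<bar>x - y\<bar>"
  shows "gamma_half_quotient (x + 1) (y + 1) \<le> gamma_half_quotient x y"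
proof -
  define G where "G = Gamma x * Gamma y / (Gamma (x + 1/2) * Gamma (y + 1/2))"
  have "G \<ge> 0"
    using assms by (simp add: G_def)
  have "Gamma (x + 1) = x * Gamma x" "Gamma (y + 1) = y * Gamma y"
       "Gamma (x + 1 + 1/2) = (x + 1/2) * Gamma (x + 1/2)"
       "Gamma (y + 1 + 1/2) = (y + 1/2) * Gamma (y + 1/2)"
    using assms Gamma_plus1_pos[of x] Gamma_plus1_pos[of y]
      Gamma_plus1_pos[of "x + 1/2"] Gamma_plus1_pos[of "y + 1/2"]
    by (simp_all add: ac_simps)
  then have "gamma_half_quotient (x + 1) (y + 1)
      = (x + y + 3/2) * x * y / ((x + 1/2) * (y + 1/2)) * G"
    using assms by (simp only: gamma_half_quotient_def G_def) (simp add: field_simps)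
  also have "\<dots> \<le> (x + y - 1/2) * G"
    using half_separated_product_le[OF assms(3)] assms \<open>G \<ge> 0\<close>
    by (intro mult_right_mono) (simp_all add: pos_divide_le_eq)
  also have "\<dots> = gamma_half_quotient x y"
    by (simp add: gamma_half_quotient_def G_def)
  finally show ?thesis .
qed

lemma gamma_half_quotient_shift_le:
  fixes x y :: real and n :: nat
  assumes "x > 0" "y > 0" "1/2 \<le> \<bar>x - y\<bar>"
  shows "gamma_half_quotient (x + n) (y + n) \<le> gamma_half_quotient x y"
proof (induction n)
  case 0
  then show ?case by simp
next
  case (Suc n)
  have "gamma_half_quotient (x + Suc n) (y + Suc n)
      = gamma_half_quotient (x + n + 1) (y + n + 1)"
    by (simp add: algebra_simps)
  also have "\<dots> \<le> gamma_half_quotient (x + n) (y + n)"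
    using assms by (intro gamma_half_quotient_shift1_le) auto
  finally show ?case
    using Suc.IH by linarith
qed

definition Mfun_prefactor :: "nat \<Rightarrow> nat \<Rightarrow> real" where
  "Mfun_prefactor mu l =
     1 / (2 * pi powr (3/2)) *
     ((4 * real l + 4 * real mu + 1) * Gamma (real l + 1/2) * Gamma (2 * real mu + 1/2)
        * Gamma (real l + real mu + 1/2))
     / (Gamma (real l + real mu + 1) * Gamma (real l + 2 * real mu + 1))"

lemma Mfun_prefactor_nonneg: "Mfun_prefactor mu l \<ge> 0"
  unfolding Mfun_prefactor_def by (intro mult_nonneg_nonneg divide_nonneg_nonneg) auto

lemma Mfun_eq_gamma_half_quotient:
  "Mfun mu m l =
     Mfun_prefactor mu l *
     gamma_half_quotient (real m - real l + 1/2) (real m + real l + 2 * real mu + 1)"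
proof -
  have "real m - real l + 1/2 + 1/2 = real m - real l + 1"
       "real m + real l + 2 * real mu + 1 + 1/2 = real m + real l + 2 * real mu + 3/2"
       "real m - real l + 1/2 + (real m + real l + 2 * real mu + 1) - 1/2
          = 2 * real mu + 2 * real m + 1"
    by simp_all
  then show ?thesis
    by (simp only: Mfun_def Mfun_prefactor_def gamma_half_quotient_def) (simp add: field_simps)
qed

theorem lemma5p5:
  fixes mu g l m m' :: nat
  assumes "l \<le> g" and "g \<le> m" and "m \<le> m'"
  shows "Mfun mu m' l \<le> Mfun mu m l"
proof -
  obtain n where m': "m' = m + n"
    using assms(3) le_Suc_ex by blast
  define x where "x = real m - real l + 1/2"
  define y where "y = real m + real l + 2 * real mu + 1"
  have "x > 0" "y > 0" "1/2 \<le> \<bar>x - y\<bar>"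
    using assms by (simp_all add: x_def y_def)
  have shift: "real m' - real l + 1/2 = x + n" "real m' + real l + 2 * real mu + 1 = y + n"
    by (simp_all add: m' x_def y_def)
  show ?thesis
    unfolding Mfun_eq_gamma_half_quotient shift x_def [symmetric] y_def [symmetric]
    using gamma_half_quotient_shift_le[OF \<open>x > 0\<close> \<open>y > 0\<close> \<open>1/2 \<le> \<bar>x - y\<bar>\<close>]
    by (intro mult_left_mono Mfun_prefactor_nonneg)
qed

end
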